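(* For all $\alpha,\beta\in\mathbb{R}$, let $\mathfrak{g}=\mathfrak{g}(\alpha,\beta)$ with center $\mathfrak{z}$, and let $\ell=e_{11}^*\in\mathfrak{g}^*$ be the linear form with $\ell(e_{11})=1$ and $\ell(e_i)=0$ for $i\le 10$. Then $\mathfrak{g}(\ell)=\mathfrak{z}$.
   Context: For $\alpha,\beta\in\mathbb{R}$, $\mathfrak{g}(\alpha,\beta)$ is the $11$-dimensional real Lie algebra with basis $e_1,\dots,e_{11}$ whose nonzero brackets (up to skew-symmetry) are: $[e_1,e_i]=e_{i+1}$ for $2\le i\le 10$; $[e_2,e_3]=e_5+\alpha e_6$, $[e_2,e_4]=e_6+\alpha e_7$, $[e_2,e_5]=-e_7+(\alpha-\beta)e_8$, $[e_2,e_6]=-3e_8+(\alpha-2\beta)e_9$, $[e_2,e_7]=-2e_9-\tfrac14(5\alpha+7\beta)e_{10}+\tfrac1{16}(27\alpha^2+12\alpha\beta+\beta^2)e_{11}$, $[e_2,e_8]=2e_{10}-\tfrac14(23\alpha+\beta)e_{11}$, $[e_2,e_9]=-e_{11}$; $[e_3,e_4]=2e_7+\beta e_8$, $[e_3,e_5]=2e_8+\beta e_9$, $[e_3,e_6]=-e_9+\tfrac14(9\alpha-\beta)e_{10}-\tfrac1{16}(27\alpha^2+12\alpha\beta+\beta^2)e_{11}$, $[e_3,e_7]=-4e_{10}+\tfrac32(3\alpha-\beta)e_{11}$, $[e_3,e_8]=3e_{11}$; $[e_4,e_5]=3e_9-\tfrac14(9\alpha-5\beta)e_{10}+\tfrac1{16}(27\alpha^2+12\alpha\beta+\beta^2)e_{11}$,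 $[e_4,e_6]=3e_{10}-\tfrac14(9\alpha-5\beta)e_{11}$, $[e_4,e_7]=-7e_{11}$; $[e_5,e_6]=10e_{11}$; all other brackets $[e_i,e_j]$ with $i<j$ are zero. Its center is $\mathfrak{z}=\mathrm{span}\{e_{11}\}$. For $\ell\in\mathfrak{g}^*$, $\mathfrak{g}(\ell)=\{y\in\mathfrak{g}:\ell([x,y])=0 \text{ for all } x\in\mathfrak{g}\}$. *)

theory Defs
  imports Complex_Main
begin

text \<open>Elements of the 11-dimensional Lie algebra g(alpha,beta) are represented as
coordinate functions x :: nat => real, where x k is the coefficient of e_k (1 <= k <= 11),
and x k = 0 for k outside 1..11.\<close>

definition gvec :: "(nat \<Rightarrow> real) set" where
  "gvec = {x. \<forall>k. k \<notin> {1..11} \<longrightarrow> x k = 0}"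

definition ebas :: "nat \<Rightarrow> nat \<Rightarrow> real" where
  "ebas a = (\<lambda>k. if k = a then 1 else 0)"

definition v2 :: "nat \<Rightarrow> real \<Rightarrow> nat \<Rightarrow> real \<Rightarrow> nat \<Rightarrow> real" where
  "v2 a p b q = (\<lambda>k. (if k = a then p else 0) + (if k = b then q else 0))"

definition v3 :: "nat \<Rightarrow> real \<Rightarrow> nat \<Rightarrow> real \<Rightarrow> nat \<Rightarrow> real \<Rightarrow> nat \<Rightarrow> real" where
  "v3 a p b q c r = (\<lambda>k. (if k = a then p else 0) + (if k = b then q else 0) + (if k = c then r else 0))"

definition ub :: "real \<Rightarrow> real \<Rightarrow> nat \<Rightarrow> nat \<Rightarrow> nat \<Rightarrow> real" where
  "ub \<alpha> \<beta> i j =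
    (if i = 1 \<and> 2 \<le> j \<and> j \<le> 10 then ebas (j + 1)
     else if (i, j) = (2, 3) then v2 5 1 6 \<alpha>
     else if (i, j) = (2, 4) then v2 6 1 7 \<alpha>
     else if (i, j) = (2, 5) then v2 7 (-1) 8 (\<alpha> - \<beta>)
     else if (i, j) = (2, 6) then v2 8 (-3) 9 (\<alpha> - 2 * \<beta>)
     else if (i, j) = (2, 7) then v3 9 (-2) 10 (-(1/4) * (5 * \<alpha> + 7 * \<beta>))
                                     11 ((1/16) * (27 * \<alpha>^2 + 12 * \<alpha> * \<beta> + \<beta>^2))
     else if (i, j) = (2, 8) then v2 10 2 11 (-(1/4) * (23 * \<alpha> + \<beta>))
     else if (i, j) = (2, 9) then (\<lambda>k. - ebas 11 k)
     else if (i, j) = (3, 4) then v2 7 2 8 \<beta>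
     else if (i, j) = (3, 5) then v2 8 2 9 \<beta>
     else if (i, j) = (3, 6) then v3 9 (-1) 10 ((1/4) * (9 * \<alpha> - \<beta>))
                                     11 (-(1/16) * (27 * \<alpha>^2 + 12 * \<alpha> * \<beta> + \<beta>^2))
     else if (i, j) = (3, 7) then v2 10 (-4) 11 ((3/2) * (3 * \<alpha> - \<beta>))
     else if (i, j) = (3, 8) then (\<lambda>k. 3 * ebas 11 k)
     else if (i, j) = (4, 5) then v3 9 3 10 (-(1/4) * (9 * \<alpha> - 5 * \<beta>))
                                     11 ((1/16) * (27 * \<alpha>^2 + 12 * \<alpha> * \<beta> + \<beta>^2))
     else if (i, j) = (4, 6) then v2 10 3 11 (-(1/4) * (9 * \<alpha> - 5 * \<beta>))
     else if (i, j) = (4, 7) then (\<lambda>k. -7 * ebas 11 k)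
     else if (i, j) = (5, 6) then (\<lambda>k. 10 * ebas 11 k)
     else (\<lambda>k. 0))"

definition bas :: "real \<Rightarrow> real \<Rightarrow> nat \<Rightarrow> nat \<Rightarrow> nat \<Rightarrow> real" where
  "bas \<alpha> \<beta> i j =
    (if i < j then ub \<alpha> \<beta> i j else if j < i then (\<lambda>k. - ub \<alpha> \<beta> j i k) else (\<lambda>k. 0))"

definition gbr :: "real \<Rightarrow> real \<Rightarrow> (nat \<Rightarrow> real) \<Rightarrow> (nat \<Rightarrow> real) \<Rightarrow> nat \<Rightarrow> real" where
  "gbr \<alpha> \<beta> x y = (\<lambda>k. \<Sum>i\<in>{1..11}. \<Sum>j\<in>{1..11}. x i * y j * bas \<alpha> \<beta> i j k)"

definition stab :: "real \<Rightarrow> real \<Rightarrow> ((nat \<Rightarrow> real) \<Rightarrow> real) \<Rightarrow> (nat \<Rightarrow> real) set" where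
  "stab \<alpha> \<beta> l = {y \<in> gvec. \<forall>x \<in> gvec. l (gbr \<alpha> \<beta> x y) = 0}"

definition zcen :: "(nat \<Rightarrow> real) set" where
  "zcen = {y. \<exists>c. y = (\<lambda>k. c * ebas 11 k)}"

definition ell :: "(nat \<Rightarrow> real) \<Rightarrow> real" where
  "ell x = x 11"

end

theory Submission imports Defs begin

text \<open>The skew form \<open>(x, y) \<mapsto> \<ell>([x, y])\<close> only sees \<open>e\<^sub>1, \<dots>, e\<^sub>1\<^sub>0\<close>, so the centre
  lies in the radical. Conversely, \<open>e\<^sub>1\<close> and \<open>e\<^sub>1\<^sub>0\<close> pair only with each other, and for
  \<open>2 \<le> k \<le> 9\<close> the vector \<open>e\<^sub>1\<^sub>1\<^sub>-\<^sub>k\<close> pairs with \<open>e\<^sub>k\<close> with a nonzero coefficient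
  (\<open>\<plusminus>1, \<plusminus>3, \<plusminus>7\<close> or \<open>\<plusminus>10\<close>) and otherwise only with \<open>e\<^sub>j\<close>, \<open>2 \<le> j < k\<close>. The form is
  therefore nondegenerate on \<open>span{e\<^sub>1, \<dots>, e\<^sub>1\<^sub>0}\<close>, and the coordinates \<open>y\<^sub>1\<^sub>0, y\<^sub>1, y\<^sub>2, \<dots>, y\<^sub>9\<close>
  of an element of the radical vanish one after the other.\<close>

lemma sum_atLeastAtMost_1_11:
  "(\<Sum>i\<in>{1..11::nat}. f i) = f 1 + f 2 + f 3 + f 4 + f 5 + f 6 + f 7 + f 8 + f 9 + f 10 + (f 11::real)"
proof -
  have "{1..11::nat} = {1,2,3,4,5,6,7,8,9,10,11}" by (auto; arith)
  then show ?thesis by simp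
qed

lemma ell_gbr:
  "ell (gbr \<alpha> \<beta> x y) =
      (x 1 * y 10 - x 10 * y 1)
    + (1/16) * (27 * \<alpha>^2 + 12 * \<alpha> * \<beta> + \<beta>^2) * (x 2 * y 7 - x 7 * y 2)
    - (1/4) * (23 * \<alpha> + \<beta>) * (x 2 * y 8 - x 8 * y 2)
    - (x 2 * y 9 - x 9 * y 2)
    - (1/16) * (27 * \<alpha>^2 + 12 * \<alpha> * \<beta> + \<beta>^2) * (x 3 * y 6 - x 6 * y 3)
    + (3/2) * (3 * \<alpha> - \<beta>) * (x 3 * y 7 - x 7 * y 3)
    + 3 * (x 3 * y 8 - x 8 * y 3)
    + (1/16) * (27 * \<alpha>^2 + 12 * \<alpha> * \<beta> + \<beta>^2) * (x 4 * y 5 - x 5 * y 4)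
    - (1/4) * (9 * \<alpha> - 5 * \<beta>) * (x 4 * y 6 - x 6 * y 4)
    - 7 * (x 4 * y 7 - x 7 * y 4)
    + 10 * (x 5 * y 6 - x 6 * y 5)"
  unfolding ell_def gbr_def sum_atLeastAtMost_1_11
  by (simp add: bas_def ub_def ebas_def v2_def v3_def algebra_simps)

lemma ebas_in_gvec: "i \<in> {1..11} \<Longrightarrow> ebas i \<in> gvec"
  by (auto simp: gvec_def ebas_def)

lemma zcen_subset_gvec: "zcen \<subseteq> gvec"
  by (auto simp: zcen_def gvec_def ebas_def)

lemma zcen_subset_stab_ell: "zcen \<subseteq> stab \<alpha> \<beta> ell"
proof
  fix y assume "y \<in> zcen"
  then obtain c where "y = (\<lambda>k. c * ebas 11 k)" unfolding zcen_def by blast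
  then have "ell (gbr \<alpha> \<beta> x y) = 0" for x
    by (simp add: ell_gbr ebas_def)
  with \<open>y \<in> zcen\<close> show "y \<in> stab \<alpha> \<beta> ell"
    using zcen_subset_gvec by (auto simp: stab_def)
qed

lemma stab_ell_coord_eq_0:
  assumes "y \<in> stab \<alpha> \<beta> ell" and "k \<in> {1..10}"
  shows "y k = 0"
proof -
  have pair: "ell (gbr \<alpha> \<beta> (ebas i) y) = 0" if "i \<in> {1..11}" for i
    using assms(1) ebas_in_gvec[OF that] by (simp add: stab_def)
  note pair_simps = ell_gbr ebas_def
  have "y 10 = 0" using pair[of 1] by (simp add: pair_simps)
  have "y 1 = 0" using pair[of 10] by (simp add: pair_simps)
  have "y 2 = 0" using pair[of 9] by (simp add: pair_simps)
  have "y 3 = 0" using pair[of 8] \<open>y 2 = 0\<close> by (simp add: pair_simps)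
  have "y 4 = 0" using pair[of 7] \<open>y 2 = 0\<close> \<open>y 3 = 0\<close> by (simp add: pair_simps)
  have "y 5 = 0" using pair[of 6] \<open>y 2 = 0\<close> \<open>y 3 = 0\<close> \<open>y 4 = 0\<close> by (simp add: pair_simps)
  have "y 6 = 0" using pair[of 5] \<open>y 2 = 0\<close> \<open>y 3 = 0\<close> \<open>y 4 = 0\<close> \<open>y 5 = 0\<close>
    by (simp add: pair_simps)
  have "y 7 = 0" using pair[of 4] \<open>y 2 = 0\<close> \<open>y 3 = 0\<close> \<open>y 4 = 0\<close> \<open>y 5 = 0\<close> \<open>y 6 = 0\<close>
    by (simp add: pair_simps)
  have "y 8 = 0"
    using pair[of 3] \<open>y 2 = 0\<close> \<open>y 3 = 0\<close> \<open>y 4 = 0\<close> \<open>y 5 = 0\<close> \<open>y 6 = 0\<close> \<open>y 7 = 0\<close>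
    by (simp add: pair_simps)
  have "y 9 = 0"
    using pair[of 2] \<open>y 2 = 0\<close> \<open>y 3 = 0\<close> \<open>y 4 = 0\<close> \<open>y 5 = 0\<close> \<open>y 6 = 0\<close> \<open>y 7 = 0\<close> \<open>y 8 = 0\<close>
    by (simp add: pair_simps)
  have "k \<in> {1,2,3,4,5,6,7,8,9,10}" using assms(2) by (auto; arith)
  then show ?thesis
    using \<open>y 1 = 0\<close> \<open>y 2 = 0\<close> \<open>y 3 = 0\<close> \<open>y 4 = 0\<close> \<open>y 5 = 0\<close> \<open>y 6 = 0\<close> \<open>y 7 = 0\<close>
      \<open>y 8 = 0\<close> \<open>y 9 = 0\<close> \<open>y 10 = 0\<close>
    by auto
qed

lemma gvec_in_zcenI:
  assumes "y \<in> gvec" and "\<And>k. k \<in> {1..10} \<Longrightarrow> y k = 0"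
  shows "y \<in> zcen"
proof -
  have "y k = y 11 * ebas 11 k" for k
  proof (cases "k \<in> {1..10}")
    case False
    with assms(1) show ?thesis
      by (cases "k = 11") (auto simp: gvec_def ebas_def)
  qed (use assms(2) in \<open>auto simp: ebas_def\<close>)
  then show ?thesis unfolding zcen_def by blast
qed

theorem proposition4p3:
  fixes \<alpha> \<beta> :: real
  shows "stab \<alpha> \<beta> ell = zcen"
proof
  show "stab \<alpha> \<beta> ell \<subseteq> zcen"
  proof
    fix y assume "y \<in> stab \<alpha> \<beta> ell"
    then show "y \<in> zcen"
      using stab_ell_coord_eq_0 by (intro gvec_in_zcenI) (auto simp: stab_def)
  qed
qed (rule zcen_subset_stab_ell)

end
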